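(* Let $B$ be an $n\times n$ matrix of non-negative integers whose last $n-m$ rows are zero, where $m\neq n$. Suppose $A=J_{nm}+B$ is irreducible and its top-left $m\times m$ corner is irreducible. Then for every integer $k\ge n+2$ there is a $k\times k$ integer matrix $C$ such that: (i) all entries in the first $k-(n-m)$ rows of $C$ are non-negative; (ii) at least one entry of $C$ equals $1$; (iii) all entries in the last $n-m$ rows of $C$ are zero; (iv) $J_{nm}+B\sim_M J_{k,\,k-(n-m)}+C$.
   Context: $J_{nm}$ ($0\le m\le n$) is the $n\times n$ matrix whose $i$-th row, for $i\le m$, has a $1$ in position $i$ and $0$ elsewhere, and whose last $n-m$ rows consist entirely of $\infty$. Arithmetic convention: $\infty+a=\infty$. For an $X\times X$ matrix $A$ with entries in $\{0,1,2,\dots\}\cup\{\infty\}$, $G_A$ is the graph with vertex set $X$ and exactly $A(x,y)$ edges from $x$ to $y$. A matrix $A$ is irreducible if $G_A$ is strongly connected. For matrices, $A\sim_M B$ means $G_A\sim_M G_B$. A graph may have multiple edges and loops. A source receives no edges, a sink emits no edges, and an infinite emitter emits infinitely many edges. A vertex is singular if it is a sink or infinite emitter, and regular otherwise. Move-equivalence $\sim_M$ is the smallest equivalence relation on graphs with finitely many vertices such that $G\sim_M E$ whenever $E$ is isomorphic to a graph obtained from $G$ by one of the following moves. (S) Delete a regular source together with the edges it emits. (R) For a regular vertex $u$ emitting exactly one edge $f$, with $r(f)\neq u$, and all of whose incoming edges have the same source $v$: delete $u$, $f$ and the edges into $u$, and add for each $e\in r^{-1}(u)$ an edge $[ef]$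 from $v$ to $r(f)$. (O) Out-splitting at a non-sink $v$ along a partition $\mathcal E_1,\dots,\mathcal E_n$ of $s^{-1}(v)$ with at most one infinite part. Replace $v$ by $v^1,\dots,v^n$. Each edge $e$ into $v$ becomes copies $e^1,\dots,e^n$ with $r(e^i)=v^i$ and source $s(e)$, or source $v^j$ if $s(e)=v$ and $e\in\mathcal E_j$. An edge from $v$ to $w\neq v$ lying in $\mathcal E_i$ gets source $v^i$. (I) In-splitting at a regular non-source $v$ along a partition $\mathcal E_1,\dots,\mathcal E_n$ of $r^{-1}(v)$. Replace $v$ by $v^1,\dots,v^n$. Each edge $e$ out of $v$ becomes copies $e^1,\dots,e^n$ with $s(e^i)=v^i$ and range $r(e)$, or range $v^j$ if $r(e)=v$ and $e\in\mathcal E_j$. An edge into $v$ from $w\neq v$ lying in $\mathcal E_i$ gets range $v^i$. *)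

theory Defs
  imports Main "HOL-Library.Extended_Nat" "HOL-Library.Nat_Bijection"
begin

record ('v, 'e) dgraph =
  gV :: "'v set"
  gE :: "'e set"
  gs :: "'e \<Rightarrow> 'v"
  gr :: "'e \<Rightarrow> 'v"

definition wf_graph :: "('v, 'e, 'x) dgraph_scheme \<Rightarrow> bool" where
  "wf_graph G \<longleftrightarrow> finite (gV G) \<and> (\<forall>e\<in>gE G. gs G e \<in> gV G \<and> gr G e \<in> gV G)"

definition graph_iso :: "('v, 'e) dgraph \<Rightarrow> ('w, 'f) dgraph \<Rightarrow> bool" where
  "graph_iso G H \<longleftrightarrow> (\<exists>\<phi> \<psi>. bij_betw \<phi> (gV G) (gV H) \<and> bij_betw \<psi> (gE G) (gE H) \<and>
     (\<forall>e\<in>gE G. gs H (\<psi> e) = \<phi> (gs G e) \<and> gr H (\<psi> e) = \<phi> (gr G e)))"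

definition out_edges :: "('v, 'e) dgraph \<Rightarrow> 'v \<Rightarrow> 'e set" where
  "out_edges G v = {e \<in> gE G. gs G e = v}"

definition in_edges :: "('v, 'e) dgraph \<Rightarrow> 'v \<Rightarrow> 'e set" where
  "in_edges G v = {e \<in> gE G. gr G e = v}"

definition is_sink :: "('v, 'e) dgraph \<Rightarrow> 'v \<Rightarrow> bool" where
  "is_sink G v \<longleftrightarrow> out_edges G v = {}"

definition is_source :: "('v, 'e) dgraph \<Rightarrow> 'v \<Rightarrow> bool" where
  "is_source G v \<longleftrightarrow> in_edges G v = {}"

definition infinite_emitter :: "('v, 'e) dgraph \<Rightarrow> 'v \<Rightarrow> bool" where
  "infinite_emitter G v \<longleftrightarrow> infinite (out_edges G v)"

definition regular :: "('v, 'e) dgraph \<Rightarrow> 'v \<Rightarrow> bool" where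
  "regular G v \<longleftrightarrow> \<not> is_sink G v \<and> \<not> infinite_emitter G v"

definition is_partition :: "'e set \<Rightarrow> nat \<Rightarrow> ('e \<Rightarrow> nat) \<Rightarrow> bool" where
  "is_partition S n c \<longleftrightarrow> (\<forall>e\<in>S. c e < n) \<and> (\<forall>i<n. \<exists>e\<in>S. c e = i)"

definition source_del :: "('v, 'e) dgraph \<Rightarrow> 'v \<Rightarrow> ('v, 'e) dgraph" where
  "source_del G u = \<lparr>gV = gV G - {u}, gE = gE G - out_edges G u, gs = gs G, gr = gr G\<rparr>"

definition move_S :: "('v, 'e) dgraph \<Rightarrow> ('v, 'e) dgraph \<Rightarrow> bool" where
  "move_S G H \<longleftrightarrow> (\<exists>u\<in>gV G. regular G u \<and> is_source G u \<and> graph_iso (source_del G u) H)"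

(* Move (R): Inl e = old edge e, Inr e = new edge [ef] *)
definition reduce :: "('v, 'e) dgraph \<Rightarrow> 'v \<Rightarrow> 'e \<Rightarrow> ('v, 'e + 'e) dgraph" where
  "reduce G u f = \<lparr>gV = gV G - {u},
     gE = Inl ` (gE G - {f} - in_edges G u) \<union> Inr ` in_edges G u,
     gs = case_sum (gs G) (gs G),
     gr = case_sum (gr G) (\<lambda>_. gr G f)\<rparr>"

definition move_R :: "('v, 'e) dgraph \<Rightarrow> ('v, 'e) dgraph \<Rightarrow> bool" where
  "move_R G H \<longleftrightarrow> (\<exists>u\<in>gV G. \<exists>f. regular G u \<and> out_edges G u = {f} \<and> gr G f \<noteq> u \<and>
      (\<exists>v\<in>gV G. \<forall>e\<in>in_edges G u. gs G e = v) \<and> graph_iso (reduce G u f) H)"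

(* Move (O): vertex Inr i = v^i (i < n), Inl w = old vertex w \<noteq> v;
   edge (e,i) = copy e^i of an edge e into v, (e,0) = the unique copy of any other edge *)
definition out_split :: "('v, 'e) dgraph \<Rightarrow> 'v \<Rightarrow> nat \<Rightarrow> ('e \<Rightarrow> nat) \<Rightarrow> ('v + nat, 'e \<times> nat) dgraph" where
  "out_split G v n c = \<lparr>gV = Inl ` (gV G - {v}) \<union> Inr ` {..<n},
     gE = {(e, i). e \<in> gE G \<and> gr G e = v \<and> i < n} \<union> {(e, 0) | e. e \<in> gE G \<and> gr G e \<noteq> v},
     gs = (\<lambda>(e, i). if gs G e = v then Inr (c e) else Inl (gs G e)),
     gr = (\<lambda>(e, i). if gr G e = v then Inr i else Inl (gr G e))\<rparr>"

definition move_O :: "('v, 'e) dgraph \<Rightarrow> ('v, 'e) dgraph \<Rightarrow> bool" where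
  "move_O G H \<longleftrightarrow> (\<exists>v\<in>gV G. \<exists>n c. \<not> is_sink G v \<and> is_partition (out_edges G v) n c \<and>
      (\<forall>i<n. \<forall>j<n. infinite {e \<in> out_edges G v. c e = i} \<and> infinite {e \<in> out_edges G v. c e = j}
          \<longrightarrow> i = j) \<and>
      graph_iso (out_split G v n c) H)"

(* Move (I): edge (e,i) = copy e^i of an edge e out of v, (e,0) = the unique copy of any other edge *)
definition in_split :: "('v, 'e) dgraph \<Rightarrow> 'v \<Rightarrow> nat \<Rightarrow> ('e \<Rightarrow> nat) \<Rightarrow> ('v + nat, 'e \<times> nat) dgraph" where
  "in_split G v n c = \<lparr>gV = Inl ` (gV G - {v}) \<union> Inr ` {..<n},
     gE = {(e, i). e \<in> gE G \<and> gs G e = v \<and> i < n} \<union> {(e, 0) | e. e \<in> gE G \<and> gs G e \<noteq> v},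
     gs = (\<lambda>(e, i). if gs G e = v then Inr i else Inl (gs G e)),
     gr = (\<lambda>(e, i). if gr G e = v then Inr (c e) else Inl (gr G e))\<rparr>"

definition move_I :: "('v, 'e) dgraph \<Rightarrow> ('v, 'e) dgraph \<Rightarrow> bool" where
  "move_I G H \<longleftrightarrow> (\<exists>v\<in>gV G. \<exists>n c. regular G v \<and> \<not> is_source G v \<and>
      is_partition (in_edges G v) n c \<and> graph_iso (in_split G v n c) H)"

definition one_move :: "('v, 'e) dgraph \<Rightarrow> ('v, 'e) dgraph \<Rightarrow> bool" where
  "one_move G H \<longleftrightarrow> wf_graph G \<and> (move_S G H \<or> move_R G H \<or> move_O G H \<or> move_I G H)"

(* Move equivalence, on graphs with finitely many vertices and countably many edges
   (vertices and edges labelled by nat) *)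
definition move_equiv :: "(nat, nat) dgraph \<Rightarrow> (nat, nat) dgraph \<Rightarrow> bool" where
  "move_equiv G H \<longleftrightarrow> wf_graph G \<and> wf_graph H \<and> equivclp one_move G H"

(* G_A for an n x n matrix A (indices 0..n-1) with entries in {0,1,...} \<union> {\<infinity>}:
   edges from x to y are the codes of (x, y, j) with j < A x y *)
definition graph_of_matrix :: "nat \<Rightarrow> (nat \<Rightarrow> nat \<Rightarrow> enat) \<Rightarrow> (nat, nat) dgraph" where
  "graph_of_matrix n A = \<lparr>gV = {..<n},
     gE = {prod_encode (x, prod_encode (y, j)) | x y j. x < n \<and> y < n \<and> enat j < A x y},
     gs = (\<lambda>e. fst (prod_decode e)),
     gr = (\<lambda>e. fst (prod_decode (snd (prod_decode e))))\<rparr>"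

definition strongly_connected :: "('v, 'e) dgraph \<Rightarrow> bool" where
  "strongly_connected G \<longleftrightarrow> (\<forall>x\<in>gV G. \<forall>y\<in>gV G.
     (\<lambda>a b. \<exists>e\<in>gE G. gs G e = a \<and> gr G e = b)\<^sup>*\<^sup>* x y)"

definition irreducible_mat :: "nat \<Rightarrow> (nat \<Rightarrow> nat \<Rightarrow> enat) \<Rightarrow> bool" where
  "irreducible_mat n A \<longleftrightarrow> strongly_connected (graph_of_matrix n A)"

definition matrix_move_equiv :: "nat \<Rightarrow> (nat \<Rightarrow> nat \<Rightarrow> enat) \<Rightarrow> nat \<Rightarrow> (nat \<Rightarrow> nat \<Rightarrow> enat) \<Rightarrow> bool" where
  "matrix_move_equiv n A k C \<longleftrightarrow> move_equiv (graph_of_matrix n A) (graph_of_matrix k C)"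

(* J_{nm}, 0-based indices: row i < m has 1 at position i, rows i \<ge> m are all \<infinity> *)
definition J :: "nat \<Rightarrow> nat \<Rightarrow> nat \<Rightarrow> nat \<Rightarrow> enat" where
  "J n m i j = (if i < m then (if i = j then 1 else 0) else \<infinity>)"

end

theory Submission
  imports Defs
begin

text \<open>Row \<open>p\<close> of \<open>J N p + D\<close> is the first row of \<open>\<infinity>\<close>s, so vertex \<open>p\<close> is an
infinite emitter with a loop. Out-splitting it into the single loop edge and all its other edges
gives \<open>J (N + 1) (p + 1) + D'\<close>: the first piece becomes a new finite row whose only edges are
the two copies of the loop, one of which lies off the diagonal and contributes the entry
\<open>D' p (p + 1) = 1\<close>, while the second piece is a row of \<open>\<infinity>\<close>s. Each split raises the size
and the number of finite rows by one, so \<open>k - n\<close> splits turn \<open>J n m + B\<close> into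
\<open>J k (k - (n - m)) + C\<close>.\<close>

abbreviation edge_code :: "nat \<Rightarrow> nat \<Rightarrow> nat \<Rightarrow> nat" where
  "edge_code x y j \<equiv> prod_encode (x, prod_encode (y, j))"

definition edge_src :: "nat \<Rightarrow> nat" where
  "edge_src e = fst (prod_decode e)"

definition edge_tgt :: "nat \<Rightarrow> nat" where
  "edge_tgt e = fst (prod_decode (snd (prod_decode e)))"

definition edge_idx :: "nat \<Rightarrow> nat" where
  "edge_idx e = snd (prod_decode (snd (prod_decode e)))"

lemma edge_code_decode [simp]:
  "edge_src (edge_code x y j) = x" "edge_tgt (edge_code x y j) = y" "edge_idx (edge_code x y j) = j"
  by (simp_all add: edge_src_def edge_tgt_def edge_idx_def)

lemma edge_code_cases: obtains x y j where "e = edge_code x y j"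
proof
  show "e = edge_code (edge_src e) (edge_tgt e) (edge_idx e)"
    by (simp add: edge_src_def edge_tgt_def edge_idx_def)
qed

lemma graph_of_matrix_simps [simp]:
  "gV (graph_of_matrix N A) = {..<N}"
  "gs (graph_of_matrix N A) = edge_src"
  "gr (graph_of_matrix N A) = edge_tgt"
  by (auto simp: graph_of_matrix_def edge_src_def edge_tgt_def fun_eq_iff)

lemma edge_code_in_graph_of_matrix [simp]:
  "edge_code x y j \<in> gE (graph_of_matrix N A) \<longleftrightarrow> x < N \<and> y < N \<and> enat j < A x y"
  by (auto simp: graph_of_matrix_def)

lemma wf_graph_of_matrix: "wf_graph (graph_of_matrix N A)"
proof -
  have "edge_src e < N \<and> edge_tgt e < N" if "e \<in> gE (graph_of_matrix N A)" for e
    using that by (cases e rule: edge_code_cases) simp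
  then show ?thesis
    by (auto simp: wf_graph_def)
qed

lemma matrix_move_equiv_if_rtranclp:
  "one_move\<^sup>*\<^sup>* (graph_of_matrix n A) (graph_of_matrix k C) \<Longrightarrow> matrix_move_equiv n A k C"
  by (simp add: matrix_move_equiv_def move_equiv_def wf_graph_of_matrix rtranclp_into_equivclp)

lemma gE_out_split:
  "gE (out_split G v n c) = {(e, i). e \<in> gE G \<and> gr G e = v \<and> i < n} \<union> {(e, 0) | e. e \<in> gE G \<and> gr G e \<noteq> v}"
  by (simp add: out_split_def)

definition J_plus :: "nat \<Rightarrow> nat \<Rightarrow> (nat \<Rightarrow> nat \<Rightarrow> nat) \<Rightarrow> nat \<Rightarrow> nat \<Rightarrow> enat" where
  "J_plus N p D i j = J N p i j + enat (D i j)"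

lemma J_plus_eq:
  "J_plus N p D i j = (if i < p then enat ((if i = j then 1 else 0) + D i j) else \<infinity>)"
  by (simp add: J_plus_def J_def one_enat_def zero_enat_def)

text \<open>After the split at \<open>p\<close>, the two new vertices are \<open>p\<close> (the loop) and \<open>p + 1\<close> (the rest);
the old vertices above \<open>p\<close> move up by one.\<close>

definition lift_index :: "nat \<Rightarrow> nat \<Rightarrow> nat" where
  "lift_index p x = (if x < p then x else x + 1)"

definition lower_index :: "nat \<Rightarrow> nat \<Rightarrow> nat" where
  "lower_index p x = (if x \<le> p then x else x - 1)"

definition split_vertex :: "nat \<Rightarrow> nat + nat \<Rightarrow> nat" where
  "split_vertex p = case_sum (lift_index p) (\<lambda>i. p + i)"

definition unsplit_vertex :: "nat \<Rightarrow> nat \<Rightarrow> nat + nat" where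
  "unsplit_vertex p x = (if x = p then Inr 0 else if x = p + 1 then Inr 1 else Inl (lower_index p x))"

definition loop_part :: "nat \<Rightarrow> nat \<Rightarrow> nat" where
  "loop_part p e = (if e = edge_code p p 0 then 0 else 1)"

definition split_matrix :: "nat \<Rightarrow> (nat \<Rightarrow> nat \<Rightarrow> nat) \<Rightarrow> nat \<Rightarrow> nat \<Rightarrow> nat" where
  "split_matrix p D i j =
     (if i < p then D i (lower_index p j) else if i = p then (if j = p + 1 then 1 else 0) else 0)"

text \<open>The copies \<open>(e, i)\<close> of an edge \<open>e\<close> into \<open>p\<close> end in \<open>p + i\<close>. The loop leaves the new
vertex \<open>p\<close>; the other loops at \<open>p\<close> leave \<open>p + 1\<close> and are renumbered to skip the removed one.\<close>

definition split_edge :: "nat \<Rightarrow> nat \<times> nat \<Rightarrow> nat" where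
  "split_edge p = (\<lambda>(e, i).
     if edge_tgt e = p then
       (if edge_src e = p then
          (if edge_idx e = 0 then edge_code p (p + i) 0 else edge_code (p + 1) (p + i) (edge_idx e - 1))
        else edge_code (lift_index p (edge_src e)) (p + i) (edge_idx e))
     else edge_code (lift_index p (edge_src e)) (lift_index p (edge_tgt e)) (edge_idx e))"

definition unsplit_edge :: "nat \<Rightarrow> nat \<Rightarrow> nat \<times> nat" where
  "unsplit_edge p e =
     (if edge_tgt e = p \<or> edge_tgt e = p + 1 then
        (if edge_src e = p then (edge_code p p 0, edge_tgt e - p)
         else if edge_src e = p + 1 then (edge_code p p (edge_idx e + 1), edge_tgt e - p)
         else (edge_code (lower_index p (edge_src e)) p (edge_idx e), edge_tgt e - p))
      else (edge_code (lower_index p (edge_src e)) (lower_index p (edge_tgt e)) (edge_idx e), 0))"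

lemma split_matrix_unit_entry: "split_matrix p D p (Suc p) = 1"
  by (simp add: split_matrix_def)

lemma split_matrix_rows_beyond: "Suc p \<le> i \<Longrightarrow> split_matrix p D i j = 0"
  by (simp add: split_matrix_def)

context
  fixes N p :: nat and D :: "nat \<Rightarrow> nat \<Rightarrow> nat"
  assumes p_less: "p < N"
begin

private abbreviation (input) "G \<equiv> graph_of_matrix N (J_plus N p D)"
private abbreviation (input) "G' \<equiv> out_split G p 2 (loop_part p)"
private abbreviation (input) "H \<equiv> graph_of_matrix (Suc N) (J_plus (Suc N) (Suc p) (split_matrix p D))"

lemma loop_part_partition: "is_partition (out_edges G p) 2 (loop_part p)"
  unfolding is_partition_def
proof safe
  fix i :: nat assume "i < 2"
  then consider "i = 0" | "i = 1" by linarith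
  then show "\<exists>e\<in>out_edges G p. loop_part p e = i"
  proof cases
    case 1
    then show ?thesis using p_less
      by (intro bexI[of _ "edge_code p p 0"]) (auto simp: loop_part_def out_edges_def J_plus_eq)
  next
    case 2
    then show ?thesis using p_less
      by (intro bexI[of _ "edge_code p p 1"]) (auto simp: loop_part_def out_edges_def J_plus_eq)
  qed
qed (auto simp: loop_part_def)

lemma loop_part_finite: "finite {e \<in> out_edges G p. loop_part p e = 0}"
  by (rule finite_subset[of _ "{edge_code p p 0}"]) (auto simp: loop_part_def split: if_splits)

lemma split_vertex_bij: "bij_betw (split_vertex p) (gV G') (gV H)"
proof (rule bij_betw_byWitness[where f' = "unsplit_vertex p"])
  show "\<forall>a\<in>gV G'. unsplit_vertex p (split_vertex p a) = a"
    by (auto simp: out_split_def split_vertex_def unsplit_vertex_def lift_index_def lower_index_def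
        split: if_splits)
  show "\<forall>a\<in>gV H. split_vertex p (unsplit_vertex p a) = a"
    by (auto simp: split_vertex_def unsplit_vertex_def lift_index_def lower_index_def)
  show "split_vertex p ` gV G' \<subseteq> gV H"
    using p_less by (auto simp: out_split_def split_vertex_def lift_index_def split: if_splits)
  show "unsplit_vertex p ` gV H \<subseteq> gV G'"
    using p_less by (auto simp: out_split_def unsplit_vertex_def lower_index_def image_iff)
qed

lemma split_edge_bij: "bij_betw (split_edge p) (gE G') (gE H)"
proof (rule bij_betw_byWitness[where f' = "unsplit_edge p"])
  show "\<forall>a\<in>gE G'. unsplit_edge p (split_edge p a) = a"
  proof
    fix a assume a: "a \<in> gE G'"
    obtain e i where ai: "a = (e, i)" by (cases a)
    obtain x y j where "e = edge_code x y j" by (rule edge_code_cases)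
    with a ai p_less show "unsplit_edge p (split_edge p a) = a"
      by (auto simp: gE_out_split split_edge_def unsplit_edge_def lift_index_def lower_index_def J_plus_eq)
  qed
  show "\<forall>a\<in>gE H. split_edge p (unsplit_edge p a) = a"
  proof
    fix a assume a: "a \<in> gE H"
    obtain x y j where "a = edge_code x y j" by (rule edge_code_cases)
    with a p_less show "split_edge p (unsplit_edge p a) = a"
      by (auto simp: split_edge_def unsplit_edge_def lift_index_def lower_index_def J_plus_eq
          split_matrix_def split: if_splits)
  qed
  show "split_edge p ` gE G' \<subseteq> gE H"
  proof (rule image_subsetI)
    fix a assume a: "a \<in> gE G'"
    obtain e i where ai: "a = (e, i)" by (cases a)
    obtain x y j where "e = edge_code x y j" by (rule edge_code_cases)
    with a ai p_less show "split_edge p a \<in> gE H"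
      by (auto simp: gE_out_split split_edge_def lift_index_def lower_index_def J_plus_eq split_matrix_def)
  qed
  show "unsplit_edge p ` gE H \<subseteq> gE G'"
  proof (rule image_subsetI)
    fix a assume a: "a \<in> gE H"
    obtain x y j where "a = edge_code x y j" by (rule edge_code_cases)
    with a p_less show "unsplit_edge p a \<in> gE G'"
      by (auto simp: gE_out_split unsplit_edge_def lower_index_def J_plus_eq split_matrix_def split: if_splits)
  qed
qed

lemma split_edge_incidence:
  assumes "a \<in> gE G'"
  shows "gs H (split_edge p a) = split_vertex p (gs G' a) \<and> gr H (split_edge p a) = split_vertex p (gr G' a)"
proof -
  obtain e i where ai: "a = (e, i)" by (cases a)
  obtain x y j where "e = edge_code x y j" by (rule edge_code_cases)
  with assms ai p_less show ?thesis
    by (auto simp: gE_out_split split_edge_def split_vertex_def lift_index_def loop_part_def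
        out_split_def J_plus_eq)
qed

lemma one_move_split_first_infinite: "one_move G H"
proof -
  have iso: "graph_iso G' H"
    unfolding graph_iso_def using split_vertex_bij split_edge_bij split_edge_incidence by blast
  have one_infinite_part:
    "\<forall>i<2. \<forall>j<2. infinite {e \<in> out_edges G p. loop_part p e = i} \<and>
       infinite {e \<in> out_edges G p. loop_part p e = j} \<longrightarrow> i = j"
    using loop_part_finite by (metis less_2_cases)
  have "\<not> is_sink G p"
    using p_less by (auto simp: is_sink_def out_edges_def J_plus_eq intro!: exI[of _ "edge_code p p 0"])
  with iso one_infinite_part loop_part_partition p_less have "move_O G H"
    unfolding move_O_def by auto
  then show ?thesis
    by (simp add: one_move_def wf_graph_of_matrix)
qed

end

lemma rtranclp_one_move_J_plus:
  assumes "p < N"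
  shows "\<exists>D'. one_move\<^sup>*\<^sup>* (graph_of_matrix N (J_plus N p D)) (graph_of_matrix (N + t) (J_plus (N + t) (p + t) D'))"
proof (induction t)
  case 0
  show ?case by auto
next
  case (Suc t)
  then obtain D' where "one_move\<^sup>*\<^sup>* (graph_of_matrix N (J_plus N p D)) (graph_of_matrix (N + t) (J_plus (N + t) (p + t) D'))"
    by blast
  moreover have "p + t < N + t" using assms by simp
  ultimately show ?case
    using one_move_split_first_infinite by (metis add_Suc_right rtranclp.rtrancl_into_rtrancl)
qed

lemma move_equiv_J_plus_with_unit_entry:
  assumes "p < N" and "N < k"
  obtains D where "matrix_move_equiv N (J_plus N p B) k (J_plus k (k - (N - p)) D)"
    and "D (k - (N - p) - 1) (k - (N - p)) = 1"
    and "\<And>i j. k - (N - p) \<le> i \<Longrightarrow> D i j = 0"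
proof -
  define t where "t = k - Suc N"
  have k: "k = Suc (N + t)" and rows: "k - (N - p) = Suc (p + t)" and "p + t < N + t"
    using assms by (auto simp: t_def)
  obtain D where "one_move\<^sup>*\<^sup>* (graph_of_matrix N (J_plus N p B)) (graph_of_matrix (N + t) (J_plus (N + t) (p + t) D))"
    using rtranclp_one_move_J_plus assms(1) by blast
  moreover note one_move_split_first_infinite[OF \<open>p + t < N + t\<close>, of D]
  ultimately have "one_move\<^sup>*\<^sup>* (graph_of_matrix N (J_plus N p B))
      (graph_of_matrix k (J_plus k (k - (N - p)) (split_matrix (p + t) D)))"
    unfolding rows unfolding k by (simp add: rtranclp.rtrancl_into_rtrancl)
  then show thesis
    using that[of "split_matrix (p + t) D"] matrix_move_equiv_if_rtranclp
      split_matrix_unit_entry split_matrix_rows_beyond rows by simp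
qed

theorem proposition8p2:
  fixes n m :: nat and B :: "nat \<Rightarrow> nat \<Rightarrow> nat"
  assumes "m \<le> n" and "m \<noteq> n"
    and "\<forall>i j. m \<le> i \<and> i < n \<and> j < n \<longrightarrow> B i j = 0"
    and "irreducible_mat n (\<lambda>i j. J n m i j + enat (B i j))"
    and "irreducible_mat m (\<lambda>i j. J n m i j + enat (B i j))"
  shows "\<forall>k::nat. k \<ge> n + 2 \<longrightarrow> (\<exists>C :: nat \<Rightarrow> nat \<Rightarrow> int.
      (\<forall>i j. i < k - (n - m) \<and> j < k \<longrightarrow> C i j \<ge> 0) \<and>
      (\<exists>i j. i < k \<and> j < k \<and> C i j = 1) \<and>
      (\<forall>i j. k - (n - m) \<le> i \<and> i < k \<and> j < k \<longrightarrow> C i j = 0) \<and>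
      matrix_move_equiv n (\<lambda>i j. J n m i j + enat (B i j))
        k (\<lambda>i j. J k (k - (n - m)) i j + enat (nat (C i j))))"
proof (intro allI impI)
  fix k :: nat assume "k \<ge> n + 2"
  have "m < n" and "n < k" using assms(1,2) \<open>k \<ge> n + 2\<close> by simp_all
  then obtain D where "matrix_move_equiv n (J_plus n m B) k (J_plus k (k - (n - m)) D)"
    and "D (k - (n - m) - 1) (k - (n - m)) = 1" and "\<And>i j. k - (n - m) \<le> i \<Longrightarrow> D i j = 0"
    by (rule move_equiv_J_plus_with_unit_entry[where B = B]) auto
  moreover have "k - (n - m) - 1 < k" "k - (n - m) < k"
    using \<open>m < n\<close> \<open>k \<ge> n + 2\<close> by simp_all
  ultimately show "\<exists>C :: nat \<Rightarrow> nat \<Rightarrow> int.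
      (\<forall>i j. i < k - (n - m) \<and> j < k \<longrightarrow> C i j \<ge> 0) \<and>
      (\<exists>i j. i < k \<and> j < k \<and> C i j = 1) \<and>
      (\<forall>i j. k - (n - m) \<le> i \<and> i < k \<and> j < k \<longrightarrow> C i j = 0) \<and>
      matrix_move_equiv n (\<lambda>i j. J n m i j + enat (B i j))
        k (\<lambda>i j. J k (k - (n - m)) i j + enat (nat (C i j)))"
    by (intro exI[of _ "\<lambda>i j. int (D i j)"]) (auto simp: J_plus_def[abs_def])
qed

end
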